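(* Every cofibration in $\mathbf{Bigpd}$ has the left lifting property with respect to every trivial fibration: given morphisms $(F,\phi):\mathcal A\to\mathcal B$, $(K,\kappa):\mathcal A\to\mathcal D$, $(G,\gamma):\mathcal B\to\mathcal C$, $(H,\eta):\mathcal D\to\mathcal C$ with $(G,\gamma)\circ(F,\phi)=(H,\eta)\circ(K,\kappa)$, $K$ a cofibration and $G$ a trivial fibration, there exists a morphism $(L,\lambda):\mathcal D\to\mathcal B$ with $(L,\lambda)\circ(K,\kappa)=(F,\phi)$ and $(G,\gamma)\circ(L,\lambda)=(H,\eta)$.
   Context: A bigroupoid $\mathcal B$ consists of: a set $\mathcal B_0$ of 0-cells; for each $A,B\in\mathcal B_0$ a groupoid $\mathcal B(A,B)$ whose objects are 1-cells and whose arrows are 2-cells; composition functors $*$; identity 1-cells $1_A$; inversion functors $(-)^*:\mathcal B(A,B)\to\mathcal B(B,A)$; and natural isomorphisms $\mathbf a:(h*g)*f\Rightarrow h*(g*f)$, $\mathbf l:1_B*f\Rightarrow f$, $\mathbf r:f*1_A\Rightarrow f$, $\mathbf e:f^**f\Rightarrow 1_A$, $\mathbf i:1_B\Rightarrow f*f^*$, such that the pentagon for $\mathbf a$ commutes, $(\mathrm{id}*\mathbf l)\circ\mathbf a=\mathbf r*\mathrm{id}$, and $\mathbf r_f\circ(\mathrm{id}*\mathbf e_f)\circ\mathbf a\circ(\mathbf i_f*\mathrm{id})=\mathbf l_f$. A morphism $(F,\phi):\mathcal A\to\mathcal B$ consists of a function on 0-cells, functors $F_{A,A'}:\mathcal A(A,A')\to\mathcal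 B(FA,FA')$ and natural isomorphisms $\phi_{g,f}:Fg*Ff\Rightarrow F(g*f)$, $\phi_A:1_{FA}\Rightarrow F1_A$, $\phi_f:(Ff)^*\Rightarrow F(f^* )$ satisfying $F\mathbf a\circ\phi\circ(\phi*\mathrm{id})=\phi\circ(\mathrm{id}*\phi)\circ\mathbf a$, $F\mathbf r\circ\phi\circ(\mathrm{id}*\phi_A)=\mathbf r$, $F\mathbf l\circ\phi\circ(\phi_B*\mathrm{id})=\mathbf l$, $F\mathbf e\circ\phi\circ(\phi_f*\mathrm{id})=\phi_A\circ\mathbf e$, $F\mathbf i\circ\phi_B=\phi\circ(\mathrm{id}*\phi_f)\circ\mathbf i$; composition is $(G,\gamma)\circ(F,\phi)=(GF,G\phi\circ\gamma F)$. Fibration: (1) for every 0-cell $A'$ of $\mathcal A$ and 1-cell $b:B\to FA'$ there is $a:A\to A'$ with $FA=B$, $Fa=b$; (2) for every 1-cell $a'$ and 2-cell $\beta:b\Rightarrow Fa'$ there is $\alpha:a\Rightarrow a'$ with $Fa=b$, $F\alpha=\beta$. Cofibration: injective on 0-cells and each $F_{A,A'}$ injective on objects. Weak equivalence: every 0-cell $B$ of $\mathcal B$ admits a 1-cell $B\to FA'$ for some 0-cell $A'$, and each $F_{A,A'}$ is an equivalence of categories. A trivial fibration is a fibration that is a weak equivalence. *)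

theory Defs
  imports Main
begin

text \<open>Convention: every 1-cell carries its source and target 0-cell (bsrc, btgt),
  and every 2-cell carries its domain and codomain 1-cell (bdom, bcod); i.e. the
  hom-groupoids B(A,B) are the disjoint pieces Hom B A B, and the 2-cells from f to g
  are Cell2 B f g.  bvc b a is vertical composition (b after a), bid the identity
  2-cell, binv the groupoid inverse, bhc / bhcc the composition functor (*) on
  1-cells / 2-cells (bhc g f = g * f), bone the identity 1-cells, bst / bstc the
  inversion functor (-)^*, and ba, bl, br, be, bi the natural isomorphisms
  a, l, r, e, i.\<close>

record ('o,'m,'c) bigpd =
  bOb :: "'o set"
  bArr :: "'m set"
  bsrc :: "'m \<Rightarrow> 'o"
  btgt :: "'m \<Rightarrow> 'o"
  bCell :: "'c set"
  bdom :: "'c \<Rightarrow> 'm"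
  bcod :: "'c \<Rightarrow> 'm"
  bvc :: "'c \<Rightarrow> 'c \<Rightarrow> 'c"
  bid :: "'m \<Rightarrow> 'c"
  binv :: "'c \<Rightarrow> 'c"
  bhc :: "'m \<Rightarrow> 'm \<Rightarrow> 'm"
  bhcc :: "'c \<Rightarrow> 'c \<Rightarrow> 'c"
  bone :: "'o \<Rightarrow> 'm"
  bst :: "'m \<Rightarrow> 'm"
  bstc :: "'c \<Rightarrow> 'c"
  ba :: "'m \<Rightarrow> 'm \<Rightarrow> 'm \<Rightarrow> 'c"
  bl :: "'m \<Rightarrow> 'c"
  br :: "'m \<Rightarrow> 'c"
  be :: "'m \<Rightarrow> 'c"
  bi :: "'m \<Rightarrow> 'c"

definition Hom :: "('o,'m,'c,'x) bigpd_scheme \<Rightarrow> 'o \<Rightarrow> 'o \<Rightarrow> 'm set" where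
  "Hom B x y = {f \<in> bArr B. bsrc B f = x \<and> btgt B f = y}"

definition Cell2 :: "('o,'m,'c,'x) bigpd_scheme \<Rightarrow> 'm \<Rightarrow> 'm \<Rightarrow> 'c set" where
  "Cell2 B f g = {\<alpha> \<in> bCell B. bdom B \<alpha> = f \<and> bcod B \<alpha> = g}"

locale bigroupoid =
  fixes B :: "('o,'m,'c) bigpd"
  assumes arr_ob: "f \<in> bArr B \<Longrightarrow> bsrc B f \<in> bOb B \<and> btgt B f \<in> bOb B"
    and cell_par: "\<alpha> \<in> bCell B \<Longrightarrow> bdom B \<alpha> \<in> bArr B \<and> bcod B \<alpha> \<in> bArr B
        \<and> bsrc B (bdom B \<alpha>) = bsrc B (bcod B \<alpha>) \<and> btgt B (bdom B \<alpha>) = btgt B (bcod B \<alpha>)"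
    and vc_cell: "\<alpha> \<in> Cell2 B f g \<Longrightarrow> \<beta> \<in> Cell2 B g h \<Longrightarrow> bvc B \<beta> \<alpha> \<in> Cell2 B f h"
    and id_cell: "f \<in> bArr B \<Longrightarrow> bid B f \<in> Cell2 B f f"
    and inv_cell: "\<alpha> \<in> Cell2 B f g \<Longrightarrow> binv B \<alpha> \<in> Cell2 B g f"
    and vc_assoc: "\<alpha> \<in> Cell2 B f g \<Longrightarrow> \<beta> \<in> Cell2 B g h \<Longrightarrow> \<gamma> \<in> Cell2 B h k \<Longrightarrow>
        bvc B (bvc B \<gamma> \<beta>) \<alpha> = bvc B \<gamma> (bvc B \<beta> \<alpha>)"
    and vc_id_left: "\<alpha> \<in> Cell2 B f g \<Longrightarrow> bvc B (bid B g) \<alpha> = \<alpha>"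
    and vc_id_right: "\<alpha> \<in> Cell2 B f g \<Longrightarrow> bvc B \<alpha> (bid B f) = \<alpha>"
    and inv_left: "\<alpha> \<in> Cell2 B f g \<Longrightarrow> bvc B (binv B \<alpha>) \<alpha> = bid B f"
    and inv_right: "\<alpha> \<in> Cell2 B f g \<Longrightarrow> bvc B \<alpha> (binv B \<alpha>) = bid B g"
    and hc_hom: "f \<in> Hom B x y \<Longrightarrow> g \<in> Hom B y z \<Longrightarrow> bhc B g f \<in> Hom B x z"
    and hcc_cell: "f \<in> Hom B x y \<Longrightarrow> g \<in> Hom B y z \<Longrightarrow> \<alpha> \<in> Cell2 B f f' \<Longrightarrow>
        \<beta> \<in> Cell2 B g g' \<Longrightarrow> bhcc B \<beta> \<alpha> \<in> Cell2 B (bhc B g f) (bhc B g' f')"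
    and hcc_vc: "f \<in> Hom B x y \<Longrightarrow> g \<in> Hom B y z \<Longrightarrow> \<alpha> \<in> Cell2 B f f' \<Longrightarrow> \<alpha>' \<in> Cell2 B f' f'' \<Longrightarrow>
        \<beta> \<in> Cell2 B g g' \<Longrightarrow> \<beta>' \<in> Cell2 B g' g'' \<Longrightarrow>
        bhcc B (bvc B \<beta>' \<beta>) (bvc B \<alpha>' \<alpha>) = bvc B (bhcc B \<beta>' \<alpha>') (bhcc B \<beta> \<alpha>)"
    and hcc_id: "f \<in> Hom B x y \<Longrightarrow> g \<in> Hom B y z \<Longrightarrow> bhcc B (bid B g) (bid B f) = bid B (bhc B g f)"
    and one_hom: "x \<in> bOb B \<Longrightarrow> bone B x \<in> Hom B x x"
    and st_hom: "f \<in> Hom B x y \<Longrightarrow> bst B f \<in> Hom B y x"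
    and stc_cell: "\<alpha> \<in> Cell2 B f g \<Longrightarrow> bstc B \<alpha> \<in> Cell2 B (bst B f) (bst B g)"
    and stc_vc: "\<alpha> \<in> Cell2 B f g \<Longrightarrow> \<beta> \<in> Cell2 B g h \<Longrightarrow>
        bstc B (bvc B \<beta> \<alpha>) = bvc B (bstc B \<beta>) (bstc B \<alpha>)"
    and stc_id: "f \<in> bArr B \<Longrightarrow> bstc B (bid B f) = bid B (bst B f)"
    and a_cell: "f \<in> Hom B w x \<Longrightarrow> g \<in> Hom B x y \<Longrightarrow> h \<in> Hom B y z \<Longrightarrow>
        ba B h g f \<in> Cell2 B (bhc B (bhc B h g) f) (bhc B h (bhc B g f))"
    and a_nat: "f \<in> Hom B w x \<Longrightarrow> g \<in> Hom B x y \<Longrightarrow> h \<in> Hom B y z \<Longrightarrow>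
        \<alpha> \<in> Cell2 B f f' \<Longrightarrow> \<beta> \<in> Cell2 B g g' \<Longrightarrow> \<theta> \<in> Cell2 B h h' \<Longrightarrow>
        bvc B (ba B h' g' f') (bhcc B (bhcc B \<theta> \<beta>) \<alpha>)
          = bvc B (bhcc B \<theta> (bhcc B \<beta> \<alpha>)) (ba B h g f)"
    and l_cell: "f \<in> Hom B x y \<Longrightarrow> bl B f \<in> Cell2 B (bhc B (bone B y) f) f"
    and l_nat: "f \<in> Hom B x y \<Longrightarrow> \<alpha> \<in> Cell2 B f f' \<Longrightarrow>
        bvc B (bl B f') (bhcc B (bid B (bone B y)) \<alpha>) = bvc B \<alpha> (bl B f)"
    and r_cell: "f \<in> Hom B x y \<Longrightarrow> br B f \<in> Cell2 B (bhc B f (bone B x)) f"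
    and r_nat: "f \<in> Hom B x y \<Longrightarrow> \<alpha> \<in> Cell2 B f f' \<Longrightarrow>
        bvc B (br B f') (bhcc B \<alpha> (bid B (bone B x))) = bvc B \<alpha> (br B f)"
    and e_cell: "f \<in> Hom B x y \<Longrightarrow> be B f \<in> Cell2 B (bhc B (bst B f) f) (bone B x)"
    and e_nat: "f \<in> Hom B x y \<Longrightarrow> \<alpha> \<in> Cell2 B f f' \<Longrightarrow>
        bvc B (be B f') (bhcc B (bstc B \<alpha>) \<alpha>) = bvc B (bid B (bone B x)) (be B f)"
    and i_cell: "f \<in> Hom B x y \<Longrightarrow> bi B f \<in> Cell2 B (bone B y) (bhc B f (bst B f))"
    and i_nat: "f \<in> Hom B x y \<Longrightarrow> \<alpha> \<in> Cell2 B f f' \<Longrightarrow>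
        bvc B (bi B f') (bid B (bone B y)) = bvc B (bhcc B \<alpha> (bstc B \<alpha>)) (bi B f)"
    and pentagon: "f \<in> Hom B v w \<Longrightarrow> g \<in> Hom B w x \<Longrightarrow> h \<in> Hom B x y \<Longrightarrow> k \<in> Hom B y z \<Longrightarrow>
        bvc B (ba B k h (bhc B g f)) (ba B (bhc B k h) g f)
          = bvc B (bhcc B (bid B k) (ba B h g f))
              (bvc B (ba B k (bhc B h g) f) (bhcc B (ba B k h g) (bid B f)))"
    and triangle: "f \<in> Hom B x y \<Longrightarrow> g \<in> Hom B y z \<Longrightarrow>
        bvc B (bhcc B (bid B g) (bl B f)) (ba B g (bone B y) f) = bhcc B (br B g) (bid B f)"
    and inverse_coh: "f \<in> Hom B x y \<Longrightarrow>
        bvc B (br B f) (bvc B (bhcc B (bid B f) (be B f))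
          (bvc B (ba B f (bst B f) f) (bhcc B (bi B f) (bid B f)))) = bl B f"

text \<open>A morphism (F, phi): m0, m1, m2 are the actions on 0-, 1-, 2-cells;
  mc g f = phi_{g,f} : Fg * Ff => F(g*f); mu x = phi_x : 1_{Fx} => F 1_x;
  ms f = phi_f : (Ff)^* => F(f^*).\<close>

record ('o,'m,'c,'p,'n,'d) bmor =
  m0 :: "'o \<Rightarrow> 'p"
  m1 :: "'m \<Rightarrow> 'n"
  m2 :: "'c \<Rightarrow> 'd"
  mc :: "'m \<Rightarrow> 'm \<Rightarrow> 'd"
  mu :: "'o \<Rightarrow> 'd"
  ms :: "'m \<Rightarrow> 'd"

locale bmorphism =
  fixes A :: "('o,'m,'c) bigpd" and B :: "('p,'n,'d) bigpd"
    and F :: "('o,'m,'c,'p,'n,'d) bmor"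
  assumes ob_map: "x \<in> bOb A \<Longrightarrow> m0 F x \<in> bOb B"
    and hom_map: "f \<in> Hom A x y \<Longrightarrow> m1 F f \<in> Hom B (m0 F x) (m0 F y)"
    and cell_map: "\<alpha> \<in> Cell2 A f g \<Longrightarrow> m2 F \<alpha> \<in> Cell2 B (m1 F f) (m1 F g)"
    and map_vc: "\<alpha> \<in> Cell2 A f g \<Longrightarrow> \<beta> \<in> Cell2 A g h \<Longrightarrow>
        m2 F (bvc A \<beta> \<alpha>) = bvc B (m2 F \<beta>) (m2 F \<alpha>)"
    and map_id: "f \<in> bArr A \<Longrightarrow> m2 F (bid A f) = bid B (m1 F f)"
    and mc_cell: "f \<in> Hom A x y \<Longrightarrow> g \<in> Hom A y z \<Longrightarrow>
        mc F g f \<in> Cell2 B (bhc B (m1 F g) (m1 F f)) (m1 F (bhc A g f))"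
    and mc_nat: "f \<in> Hom A x y \<Longrightarrow> g \<in> Hom A y z \<Longrightarrow> \<alpha> \<in> Cell2 A f f' \<Longrightarrow> \<beta> \<in> Cell2 A g g' \<Longrightarrow>
        bvc B (mc F g' f') (bhcc B (m2 F \<beta>) (m2 F \<alpha>)) = bvc B (m2 F (bhcc A \<beta> \<alpha>)) (mc F g f)"
    and mu_cell: "x \<in> bOb A \<Longrightarrow> mu F x \<in> Cell2 B (bone B (m0 F x)) (m1 F (bone A x))"
    and ms_cell: "f \<in> Hom A x y \<Longrightarrow> ms F f \<in> Cell2 B (bst B (m1 F f)) (m1 F (bst A f))"
    and ms_nat: "f \<in> Hom A x y \<Longrightarrow> \<alpha> \<in> Cell2 A f f' \<Longrightarrow>
        bvc B (ms F f') (bstc B (m2 F \<alpha>)) = bvc B (m2 F (bstc A \<alpha>)) (ms F f)"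
    and coh_a: "f \<in> Hom A w x \<Longrightarrow> g \<in> Hom A x y \<Longrightarrow> h \<in> Hom A y z \<Longrightarrow>
        bvc B (m2 F (ba A h g f)) (bvc B (mc F (bhc A h g) f) (bhcc B (mc F h g) (bid B (m1 F f))))
          = bvc B (mc F h (bhc A g f)) (bvc B (bhcc B (bid B (m1 F h)) (mc F g f))
              (ba B (m1 F h) (m1 F g) (m1 F f)))"
    and coh_r: "f \<in> Hom A x y \<Longrightarrow>
        bvc B (m2 F (br A f)) (bvc B (mc F f (bone A x)) (bhcc B (bid B (m1 F f)) (mu F x)))
          = br B (m1 F f)"
    and coh_l: "f \<in> Hom A x y \<Longrightarrow>
        bvc B (m2 F (bl A f)) (bvc B (mc F (bone A y) f) (bhcc B (mu F y) (bid B (m1 F f))))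
          = bl B (m1 F f)"
    and coh_e: "f \<in> Hom A x y \<Longrightarrow>
        bvc B (m2 F (be A f)) (bvc B (mc F (bst A f) f) (bhcc B (ms F f) (bid B (m1 F f))))
          = bvc B (mu F x) (be B (m1 F f))"
    and coh_i: "f \<in> Hom A x y \<Longrightarrow>
        bvc B (m2 F (bi A f)) (mu F y)
          = bvc B (mc F f (bst A f)) (bvc B (bhcc B (bid B (m1 F f)) (ms F f)) (bi B (m1 F f)))"

definition bmor_comp ::
  "('q,'k,'e) bigpd \<Rightarrow> ('p,'n,'d,'q,'k,'e) bmor \<Rightarrow> ('o,'m,'c,'p,'n,'d) bmor \<Rightarrow> ('o,'m,'c,'q,'k,'e) bmor"
  where
  "bmor_comp C G F =
     \<lparr> m0 = m0 G \<circ> m0 F, m1 = m1 G \<circ> m1 F, m2 = m2 G \<circ> m2 F,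
       mc = (\<lambda>g f. bvc C (m2 G (mc F g f)) (mc G (m1 F g) (m1 F f))),
       mu = (\<lambda>x. bvc C (m2 G (mu F x)) (mu G (m0 F x))),
       ms = (\<lambda>f. bvc C (m2 G (ms F f)) (ms G (m1 F f))) \<rparr>"

definition bmor_eq ::
  "('o,'m,'c) bigpd \<Rightarrow> ('o,'m,'c,'p,'n,'d) bmor \<Rightarrow> ('o,'m,'c,'p,'n,'d) bmor \<Rightarrow> bool" where
  "bmor_eq A F G \<longleftrightarrow>
     (\<forall>x \<in> bOb A. m0 F x = m0 G x \<and> mu F x = mu G x) \<and>
     (\<forall>f \<in> bArr A. m1 F f = m1 G f \<and> ms F f = ms G f) \<and>
     (\<forall>\<alpha> \<in> bCell A. m2 F \<alpha> = m2 G \<alpha>) \<and>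
     (\<forall>f \<in> bArr A. \<forall>g \<in> bArr A. bsrc A g = btgt A f \<longrightarrow> mc F g f = mc G g f)"

definition fibration ::
  "('o,'m,'c) bigpd \<Rightarrow> ('p,'n,'d) bigpd \<Rightarrow> ('o,'m,'c,'p,'n,'d) bmor \<Rightarrow> bool" where
  "fibration A B F \<longleftrightarrow>
     (\<forall>x' \<in> bOb A. \<forall>b \<in> bArr B. btgt B b = m0 F x' \<longrightarrow>
        (\<exists>a \<in> bArr A. btgt A a = x' \<and> m0 F (bsrc A a) = bsrc B b \<and> m1 F a = b)) \<and>
     (\<forall>a' \<in> bArr A. \<forall>\<beta> \<in> bCell B. bcod B \<beta> = m1 F a' \<longrightarrow>
        (\<exists>\<alpha> \<in> bCell A. bcod A \<alpha> = a' \<and> m1 F (bdom A \<alpha>) = bdom B \<beta> \<and> m2 F \<alpha> = \<beta>))"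

definition cofibration ::
  "('o,'m,'c) bigpd \<Rightarrow> ('p,'n,'d) bigpd \<Rightarrow> ('o,'m,'c,'p,'n,'d) bmor \<Rightarrow> bool" where
  "cofibration A B F \<longleftrightarrow>
     inj_on (m0 F) (bOb A) \<and> (\<forall>x \<in> bOb A. \<forall>y \<in> bOb A. inj_on (m1 F) (Hom A x y))"

text \<open>F_{x,y} : A(x,y) -> B(Fx,Fy) is an equivalence of categories: there is a
  functor G back and natural isomorphisms eta : id => GF and eps : FG => id
  (naturality suffices: every 2-cell is invertible in a groupoid).\<close>

definition hom_equivalence ::
  "('o,'m,'c) bigpd \<Rightarrow> ('p,'n,'d) bigpd \<Rightarrow> ('o,'m,'c,'p,'n,'d) bmor \<Rightarrow> 'o \<Rightarrow> 'o \<Rightarrow> bool" where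
  "hom_equivalence A B F x y \<longleftrightarrow>
    (\<exists>(G1 :: 'n \<Rightarrow> 'm) (G2 :: 'd \<Rightarrow> 'c) (\<eta> :: 'm \<Rightarrow> 'c) (\<epsilon> :: 'n \<Rightarrow> 'd).
      (\<forall>g \<in> Hom B (m0 F x) (m0 F y). G1 g \<in> Hom A x y) \<and>
      (\<forall>g \<in> Hom B (m0 F x) (m0 F y). \<forall>g'. \<forall>\<beta> \<in> Cell2 B g g'. G2 \<beta> \<in> Cell2 A (G1 g) (G1 g')) \<and>
      (\<forall>g \<in> Hom B (m0 F x) (m0 F y). \<forall>g' g''. \<forall>\<beta> \<in> Cell2 B g g'. \<forall>\<beta>' \<in> Cell2 B g' g''.
          G2 (bvc B \<beta>' \<beta>) = bvc A (G2 \<beta>') (G2 \<beta>)) \<and>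
      (\<forall>g \<in> Hom B (m0 F x) (m0 F y). G2 (bid B g) = bid A (G1 g)) \<and>
      (\<forall>f \<in> Hom A x y. \<eta> f \<in> Cell2 A f (G1 (m1 F f))) \<and>
      (\<forall>f \<in> Hom A x y. \<forall>f'. \<forall>\<alpha> \<in> Cell2 A f f'.
          bvc A (\<eta> f') \<alpha> = bvc A (G2 (m2 F \<alpha>)) (\<eta> f)) \<and>
      (\<forall>g \<in> Hom B (m0 F x) (m0 F y). \<epsilon> g \<in> Cell2 B (m1 F (G1 g)) g) \<and>
      (\<forall>g \<in> Hom B (m0 F x) (m0 F y). \<forall>g'. \<forall>\<beta> \<in> Cell2 B g g'.
          bvc B (\<epsilon> g') (m2 F (G2 \<beta>)) = bvc B \<beta> (\<epsilon> g)))"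

definition weak_equivalence ::
  "('o,'m,'c) bigpd \<Rightarrow> ('p,'n,'d) bigpd \<Rightarrow> ('o,'m,'c,'p,'n,'d) bmor \<Rightarrow> bool" where
  "weak_equivalence A B F \<longleftrightarrow>
     (\<forall>y \<in> bOb B. \<exists>x' \<in> bOb A. Hom B y (m0 F x') \<noteq> {}) \<and>
     (\<forall>x \<in> bOb A. \<forall>y \<in> bOb A. hom_equivalence A B F x y)"

definition trivial_fibration ::
  "('o,'m,'c) bigpd \<Rightarrow> ('p,'n,'d) bigpd \<Rightarrow> ('o,'m,'c,'p,'n,'d) bmor \<Rightarrow> bool" where
  "trivial_fibration A B F \<longleftrightarrow> fibration A B F \<and> weak_equivalence A B F"

end

theory Submission imports Defs begin

text \<open>The lift \<open>L : DD \<rightarrow> BB\<close> is built cell by cell. On the image of the cofibration \<open>K\<close>,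
  which is injective on 0- and 1-cells, it is forced to agree with \<open>F\<close>. Elsewhere \<open>L\<close> picks
  \<open>G\<close>-preimages of the values of \<open>H\<close>: the trivial fibration \<open>G\<close> is surjective on 0-cells and,
  with prescribed endpoints, on 1-cells (an essential preimage is made strict by lifting a 2-cell).
  On 2-cells \<open>G\<close> is fully faithful, so every 2-cell of \<open>DD\<close>, and every structure 2-cell of \<open>H\<close>
  corrected by the inverse structure 2-cell of \<open>G\<close>, has a unique \<open>G\<close>-preimage with the
  required boundary; these are the 2-cells and structure 2-cells of \<open>L\<close>. All morphism axioms
  and both triangles of the lifting square are then equations between 2-cells of \<open>BB\<close> which,
  after applying the faithful \<open>G\<close>, become axioms of \<open>H\<close> and \<open>G\<close> or the commutativity of the
  square.\<close>

context bigroupoid begin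

lemma dom_cod_simps:
  assumes "\<alpha> \<in> bCell B"
  shows "bdom B \<alpha> \<in> bArr B" "bcod B \<alpha> \<in> bArr B"
    "bsrc B (bcod B \<alpha>) = bsrc B (bdom B \<alpha>)" "btgt B (bcod B \<alpha>) = btgt B (bdom B \<alpha>)"
  using cell_par[OF assms] by auto

lemma src_tgt_ob:
  assumes "f \<in> bArr B" shows "bsrc B f \<in> bOb B" "btgt B f \<in> bOb B"
  using arr_ob[OF assms] by auto

lemma vc_simps:
  assumes "\<alpha> \<in> bCell B" "\<beta> \<in> bCell B" "bcod B \<alpha> = bdom B \<beta>"
  shows "bvc B \<beta> \<alpha> \<in> bCell B" "bdom B (bvc B \<beta> \<alpha>) = bdom B \<alpha>" "bcod B (bvc B \<beta> \<alpha>) = bcod B \<beta>"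
  using vc_cell[of \<alpha> "bdom B \<alpha>" "bcod B \<alpha>" \<beta> "bcod B \<beta>"] assms by (auto simp: Cell2_def)

lemma hcc_simps:
  assumes "\<alpha> \<in> bCell B" "\<beta> \<in> bCell B" "btgt B (bdom B \<alpha>) = bsrc B (bdom B \<beta>)"
  shows "bhcc B \<beta> \<alpha> \<in> bCell B" "bdom B (bhcc B \<beta> \<alpha>) = bhc B (bdom B \<beta>) (bdom B \<alpha>)"
    "bcod B (bhcc B \<beta> \<alpha>) = bhc B (bcod B \<beta>) (bcod B \<alpha>)"
  using hcc_cell[of "bdom B \<alpha>" "bsrc B (bdom B \<alpha>)" "btgt B (bdom B \<alpha>)" "bdom B \<beta>" "btgt B (bdom B \<beta>)"
      \<alpha> "bcod B \<alpha>" \<beta> "bcod B \<beta>"] assms dom_cod_simps[OF assms(1)] dom_cod_simps[OF assms(2)]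
  by (auto simp: Cell2_def Hom_def)

lemma hc_simps:
  assumes "f \<in> bArr B" "g \<in> bArr B" "btgt B f = bsrc B g"
  shows "bhc B g f \<in> bArr B" "bsrc B (bhc B g f) = bsrc B f" "btgt B (bhc B g f) = btgt B g"
  using hc_hom[of f "bsrc B f" "btgt B f" g "btgt B g"] assms by (auto simp: Hom_def)

lemma id_simps:
  assumes "f \<in> bArr B"
  shows "bid B f \<in> bCell B" "bdom B (bid B f) = f" "bcod B (bid B f) = f"
  using id_cell[OF assms] by (auto simp: Cell2_def)

lemma inv_simps:
  assumes "\<alpha> \<in> bCell B"
  shows "binv B \<alpha> \<in> bCell B" "bdom B (binv B \<alpha>) = bcod B \<alpha>" "bcod B (binv B \<alpha>) = bdom B \<alpha>"
  using inv_cell[of \<alpha> "bdom B \<alpha>" "bcod B \<alpha>"] assms by (auto simp: Cell2_def)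

lemma one_simps:
  assumes "x \<in> bOb B"
  shows "bone B x \<in> bArr B" "bsrc B (bone B x) = x" "btgt B (bone B x) = x"
  using one_hom[OF assms] by (auto simp: Hom_def)

lemma st_simps:
  assumes "f \<in> bArr B"
  shows "bst B f \<in> bArr B" "bsrc B (bst B f) = btgt B f" "btgt B (bst B f) = bsrc B f"
  using st_hom[of f "bsrc B f" "btgt B f"] assms by (auto simp: Hom_def)

lemma stc_simps:
  assumes "\<alpha> \<in> bCell B"
  shows "bstc B \<alpha> \<in> bCell B" "bdom B (bstc B \<alpha>) = bst B (bdom B \<alpha>)" "bcod B (bstc B \<alpha>) = bst B (bcod B \<alpha>)"
  using stc_cell[of \<alpha> "bdom B \<alpha>" "bcod B \<alpha>"] assms by (auto simp: Cell2_def)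

lemma a_simps:
  assumes "f \<in> bArr B" "g \<in> bArr B" "h \<in> bArr B" "btgt B f = bsrc B g" "btgt B g = bsrc B h"
  shows "ba B h g f \<in> bCell B" "bdom B (ba B h g f) = bhc B (bhc B h g) f"
    "bcod B (ba B h g f) = bhc B h (bhc B g f)"
  using a_cell[of f "bsrc B f" "btgt B f" g "btgt B g" h "btgt B h"] assms by (auto simp: Hom_def Cell2_def)

lemma l_simps:
  assumes "f \<in> bArr B"
  shows "bl B f \<in> bCell B" "bdom B (bl B f) = bhc B (bone B (btgt B f)) f" "bcod B (bl B f) = f"
  using l_cell[of f "bsrc B f" "btgt B f"] assms by (auto simp: Hom_def Cell2_def)

lemma r_simps:
  assumes "f \<in> bArr B"
  shows "br B f \<in> bCell B" "bdom B (br B f) = bhc B f (bone B (bsrc B f))" "bcod B (br B f) = f"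
  using r_cell[of f "bsrc B f" "btgt B f"] assms by (auto simp: Hom_def Cell2_def)

lemma e_simps:
  assumes "f \<in> bArr B"
  shows "be B f \<in> bCell B" "bdom B (be B f) = bhc B (bst B f) f" "bcod B (be B f) = bone B (bsrc B f)"
  using e_cell[of f "bsrc B f" "btgt B f"] assms by (auto simp: Hom_def Cell2_def)

lemma i_simps:
  assumes "f \<in> bArr B"
  shows "bi B f \<in> bCell B" "bdom B (bi B f) = bone B (btgt B f)" "bcod B (bi B f) = bhc B f (bst B f)"
  using i_cell[of f "bsrc B f" "btgt B f"] assms by (auto simp: Hom_def Cell2_def)

lemmas typing_simps = dom_cod_simps(1,2) src_tgt_ob vc_simps hcc_simps hc_simps id_simps inv_simps one_simps st_simps stc_simps
  a_simps l_simps r_simps e_simps i_simps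

lemma assoc:
  assumes "\<alpha> \<in> bCell B" "\<beta> \<in> bCell B" "\<gamma> \<in> bCell B" "bcod B \<alpha> = bdom B \<beta>" "bcod B \<beta> = bdom B \<gamma>"
  shows "bvc B (bvc B \<gamma> \<beta>) \<alpha> = bvc B \<gamma> (bvc B \<beta> \<alpha>)"
  using vc_assoc[of \<alpha> "bdom B \<alpha>" "bcod B \<alpha>" \<beta> "bcod B \<beta>" \<gamma> "bcod B \<gamma>"] assms by (auto simp: Cell2_def)

lemma id_vc: "\<alpha> \<in> bCell B \<Longrightarrow> bcod B \<alpha> = g \<Longrightarrow> bvc B (bid B g) \<alpha> = \<alpha>"
  using vc_id_left[of \<alpha> "bdom B \<alpha>" g] by (auto simp: Cell2_def)
lemma vc_id: "\<alpha> \<in> bCell B \<Longrightarrow> bdom B \<alpha> = f \<Longrightarrow> bvc B \<alpha> (bid B f) = \<alpha>"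
  using vc_id_right[of \<alpha> f "bcod B \<alpha>"] by (auto simp: Cell2_def)
lemma inv_vc: "\<alpha> \<in> bCell B \<Longrightarrow> bvc B (binv B \<alpha>) \<alpha> = bid B (bdom B \<alpha>)"
  using inv_left[of \<alpha> "bdom B \<alpha>" "bcod B \<alpha>"] by (auto simp: Cell2_def)
lemma vc_inv: "\<alpha> \<in> bCell B \<Longrightarrow> bvc B \<alpha> (binv B \<alpha>) = bid B (bcod B \<alpha>)"
  using inv_right[of \<alpha> "bdom B \<alpha>" "bcod B \<alpha>"] by (auto simp: Cell2_def)
lemma inv_vc_vc: "\<alpha> \<in> bCell B \<Longrightarrow> r \<in> bCell B \<Longrightarrow> bcod B r = bdom B \<alpha> \<Longrightarrow> bvc B (binv B \<alpha>) (bvc B \<alpha> r) = r"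
  by (simp add: assoc[symmetric] inv_simps inv_vc id_vc)
lemma vc_inv_vc: "\<alpha> \<in> bCell B \<Longrightarrow> r \<in> bCell B \<Longrightarrow> bcod B r = bcod B \<alpha> \<Longrightarrow> bvc B \<alpha> (bvc B (binv B \<alpha>) r) = r"
  by (simp add: assoc[symmetric] inv_simps vc_inv id_vc)
lemma vc_vc_inv: "\<alpha> \<in> bCell B \<Longrightarrow> r \<in> bCell B \<Longrightarrow> bdom B r = bcod B \<alpha> \<Longrightarrow> bvc B (bvc B r \<alpha>) (binv B \<alpha>) = r"
  by (simp add: assoc inv_simps vc_inv vc_id)

lemma interchange:
  assumes "\<alpha> \<in> bCell B" "\<alpha>' \<in> bCell B" "\<beta> \<in> bCell B" "\<beta>' \<in> bCell B"
    "bcod B \<alpha> = bdom B \<alpha>'" "bcod B \<beta> = bdom B \<beta>'" "btgt B (bdom B \<alpha>) = bsrc B (bdom B \<beta>)"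
  shows "bvc B (bhcc B \<beta>' \<alpha>') (bhcc B \<beta> \<alpha>) = bhcc B (bvc B \<beta>' \<beta>) (bvc B \<alpha>' \<alpha>)"
  by (rule hcc_vc[of "bdom B \<alpha>" "bsrc B (bdom B \<alpha>)" "btgt B (bdom B \<alpha>)" "bdom B \<beta>" "btgt B (bdom B \<beta>)"
      \<alpha> "bcod B \<alpha>" \<alpha>' "bcod B \<alpha>'" \<beta> "bcod B \<beta>" \<beta>' "bcod B \<beta>'", symmetric])
    (use assms dom_cod_simps in \<open>simp_all add: Cell2_def Hom_def\<close>)

lemma interchange_vc:
  assumes "\<alpha> \<in> bCell B" "\<alpha>' \<in> bCell B" "\<beta> \<in> bCell B" "\<beta>' \<in> bCell B"
    "bcod B \<alpha> = bdom B \<alpha>'" "bcod B \<beta> = bdom B \<beta>'" "btgt B (bdom B \<alpha>) = bsrc B (bdom B \<beta>)"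
    "r \<in> bCell B" "bcod B r = bhc B (bdom B \<beta>) (bdom B \<alpha>)"
  shows "bvc B (bhcc B \<beta>' \<alpha>') (bvc B (bhcc B \<beta> \<alpha>) r) = bvc B (bhcc B (bvc B \<beta>' \<beta>) (bvc B \<alpha>' \<alpha>)) r"
proof -
  have t: "btgt B (bdom B \<alpha>') = bsrc B (bdom B \<beta>')"
    using assms(5,6,7) dom_cod_simps(4)[OF assms(1)] dom_cod_simps(3)[OF assms(3)] by simp
  note c1 = hcc_simps[OF assms(1,3,7)]
  note c2 = hcc_simps[OF assms(2,4) t]
  have e: "bcod B (bhcc B \<beta> \<alpha>) = bdom B (bhcc B \<beta>' \<alpha>')" using c1(3) c2(2) assms(5,6) by simp
  have "bvc B (bvc B (bhcc B \<beta>' \<alpha>') (bhcc B \<beta> \<alpha>)) r = bvc B (bhcc B \<beta>' \<alpha>') (bvc B (bhcc B \<beta> \<alpha>) r)"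
    by (rule assoc[OF assms(8) c1(1) c2(1) _ e]) (simp add: c1(2) assms(9))
  then show ?thesis using interchange[OF assms(1-7)] by simp
qed

lemma vc_eq_vc_assoc:
  assumes "\<alpha> \<in> bCell B" "\<beta> \<in> bCell B" "\<gamma> \<in> bCell B" "\<delta> \<in> bCell B" "r \<in> bCell B"
    "bcod B \<alpha> = bdom B \<beta>" "bcod B \<gamma> = bdom B \<delta>" "bcod B r = bdom B \<alpha>" "bcod B r = bdom B \<gamma>"
    "bvc B \<beta> \<alpha> = bvc B \<delta> \<gamma>"
  shows "bvc B \<beta> (bvc B \<alpha> r) = bvc B \<delta> (bvc B \<gamma> r)"
  using assms by (simp add: assoc[symmetric])

lemma vc_cancel_left:
  assumes "\<beta> \<in> bCell B" "\<beta>' \<in> bCell B" "\<epsilon> \<in> bCell B" "bcod B \<beta> = bdom B \<epsilon>" "bcod B \<beta>' = bdom B \<epsilon>"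
    "bvc B \<epsilon> \<beta> = bvc B \<epsilon> \<beta>'"
  shows "\<beta> = \<beta>'"
proof -
  have "\<beta> = bvc B (binv B \<epsilon>) (bvc B \<epsilon> \<beta>)" using inv_vc_vc[OF assms(3,1,4)] by simp
  also have "\<dots> = bvc B (binv B \<epsilon>) (bvc B \<epsilon> \<beta>')" using assms(6) by simp
  also have "\<dots> = \<beta>'" using inv_vc_vc[OF assms(3,2,5)] .
  finally show ?thesis .
qed

lemma vc_cancel_right:
  assumes "\<beta> \<in> bCell B" "\<beta>' \<in> bCell B" "\<epsilon> \<in> bCell B" "bdom B \<beta> = bcod B \<epsilon>" "bdom B \<beta>' = bcod B \<epsilon>"
    "bvc B \<beta> \<epsilon> = bvc B \<beta>' \<epsilon>"
  shows "\<beta> = \<beta>'"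
proof -
  have "\<beta> = bvc B (bvc B \<beta> \<epsilon>) (binv B \<epsilon>)" using vc_vc_inv[OF assms(3,1,4)] by simp
  also have "\<dots> = bvc B (bvc B \<beta>' \<epsilon>) (binv B \<epsilon>)" using assms(6) by simp
  also have "\<dots> = \<beta>'" using vc_vc_inv[OF assms(3,2,5)] .
  finally show ?thesis .
qed

end

locale bigpd_morphism = bmorphism A B F + A: bigroupoid A + B: bigroupoid B
  for A :: "('o,'m,'c) bigpd" and B :: "('p,'n,'d) bigpd" and F :: "('o,'m,'c,'p,'n,'d) bmor"
begin

lemma map_arr_simps:
  assumes "f \<in> bArr A"
  shows "m1 F f \<in> bArr B" "bsrc B (m1 F f) = m0 F (bsrc A f)" "btgt B (m1 F f) = m0 F (btgt A f)"
  using hom_map[of f "bsrc A f" "btgt A f"] assms by (auto simp: Hom_def)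

lemma map_cell_simps:
  assumes "\<alpha> \<in> bCell A"
  shows "m2 F \<alpha> \<in> bCell B" "bdom B (m2 F \<alpha>) = m1 F (bdom A \<alpha>)" "bcod B (m2 F \<alpha>) = m1 F (bcod A \<alpha>)"
  using cell_map[of \<alpha> "bdom A \<alpha>" "bcod A \<alpha>"] assms by (auto simp: Cell2_def)

lemma map_vc_cells:
  assumes "\<alpha> \<in> bCell A" "\<beta> \<in> bCell A" "bcod A \<alpha> = bdom A \<beta>"
  shows "m2 F (bvc A \<beta> \<alpha>) = bvc B (m2 F \<beta>) (m2 F \<alpha>)"
  using map_vc[of \<alpha> "bdom A \<alpha>" "bcod A \<alpha>" \<beta> "bcod A \<beta>"] assms by (auto simp: Cell2_def)

lemma mc_simps:
  assumes "f \<in> bArr A" "g \<in> bArr A" "btgt A f = bsrc A g"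
  shows "mc F g f \<in> bCell B" "bdom B (mc F g f) = bhc B (m1 F g) (m1 F f)" "bcod B (mc F g f) = m1 F (bhc A g f)"
  using mc_cell[of f "bsrc A f" "btgt A f" g "btgt A g"] assms by (auto simp: Cell2_def Hom_def)

lemma mu_simps:
  assumes "x \<in> bOb A"
  shows "mu F x \<in> bCell B" "bdom B (mu F x) = bone B (m0 F x)" "bcod B (mu F x) = m1 F (bone A x)"
  using mu_cell[OF assms] by (auto simp: Cell2_def)

lemma ms_simps:
  assumes "f \<in> bArr A"
  shows "ms F f \<in> bCell B" "bdom B (ms F f) = bst B (m1 F f)" "bcod B (ms F f) = m1 F (bst A f)"
  using ms_cell[of f "bsrc A f" "btgt A f"] assms by (auto simp: Cell2_def Hom_def)

lemma mc_nat_cells: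
  assumes "\<alpha> \<in> bCell A" "\<beta> \<in> bCell A" "btgt A (bdom A \<alpha>) = bsrc A (bdom A \<beta>)"
  shows "bvc B (m2 F (bhcc A \<beta> \<alpha>)) (mc F (bdom A \<beta>) (bdom A \<alpha>))
     = bvc B (mc F (bcod A \<beta>) (bcod A \<alpha>)) (bhcc B (m2 F \<beta>) (m2 F \<alpha>))"
  using mc_nat[of "bdom A \<alpha>" "bsrc A (bdom A \<alpha>)" "btgt A (bdom A \<alpha>)" "bdom A \<beta>" "btgt A (bdom A \<beta>)"
     \<alpha> "bcod A \<alpha>" \<beta> "bcod A \<beta>"] assms A.dom_cod_simps[OF assms(1)] A.dom_cod_simps[OF assms(2)]
  by (auto simp: Cell2_def Hom_def)

lemma ms_nat_cells:
  assumes "\<alpha> \<in> bCell A"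
  shows "bvc B (m2 F (bstc A \<alpha>)) (ms F (bdom A \<alpha>)) = bvc B (ms F (bcod A \<alpha>)) (bstc B (m2 F \<alpha>))"
  using ms_nat[of "bdom A \<alpha>" "bsrc A (bdom A \<alpha>)" "btgt A (bdom A \<alpha>)" \<alpha> "bcod A \<alpha>"] assms A.dom_cod_simps[OF assms(1)]
  by (auto simp: Cell2_def Hom_def)

lemma mc_nat_simp:
  assumes "\<alpha> \<in> bCell A" "\<beta> \<in> bCell A" "btgt A (bdom A \<alpha>) = bsrc A (bdom A \<beta>)" "bdom A \<beta> = g" "bdom A \<alpha> = f"
  shows "bvc B (m2 F (bhcc A \<beta> \<alpha>)) (mc F g f)
     = bvc B (mc F (bcod A \<beta>) (bcod A \<alpha>)) (bhcc B (m2 F \<beta>) (m2 F \<alpha>))"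
  using mc_nat_cells[OF assms(1-3)] assms(4,5) by simp

lemma mc_nat_simp_vc:
  assumes "\<alpha> \<in> bCell A" "\<beta> \<in> bCell A" "btgt A (bdom A \<alpha>) = bsrc A (bdom A \<beta>)" "bdom A \<beta> = g" "bdom A \<alpha> = f"
    "r \<in> bCell B" "bcod B r = bhc B (m1 F g) (m1 F f)"
  shows "bvc B (m2 F (bhcc A \<beta> \<alpha>)) (bvc B (mc F g f) r)
     = bvc B (mc F (bcod A \<beta>) (bcod A \<alpha>)) (bvc B (bhcc B (m2 F \<beta>) (m2 F \<alpha>)) r)"
  by (rule B.vc_eq_vc_assoc[OF _ _ _ _ assms(6) _ _ _ _ mc_nat_simp[OF assms(1-5)]])
    (use assms in \<open>auto simp: A.typing_simps A.dom_cod_simps B.typing_simps map_arr_simps map_cell_simps mc_simps\<close>)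

lemma ms_nat_simp:
  assumes "\<alpha> \<in> bCell A" "bdom A \<alpha> = f"
  shows "bvc B (m2 F (bstc A \<alpha>)) (ms F f) = bvc B (ms F (bcod A \<alpha>)) (bstc B (m2 F \<alpha>))"
  using ms_nat_cells[OF assms(1)] assms(2) by simp

lemma ms_nat_simp_vc:
  assumes "\<alpha> \<in> bCell A" "bdom A \<alpha> = f" "r \<in> bCell B" "bcod B r = bst B (m1 F f)"
  shows "bvc B (m2 F (bstc A \<alpha>)) (bvc B (ms F f) r) = bvc B (ms F (bcod A \<alpha>)) (bvc B (bstc B (m2 F \<alpha>)) r)"
  by (rule B.vc_eq_vc_assoc[OF _ _ _ _ assms(3) _ _ _ _ ms_nat_simp[OF assms(1,2)]])
    (use assms in \<open>auto simp: A.typing_simps B.typing_simps map_cell_simps ms_simps\<close>)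

end

locale weak_equivalence_morphism = bigpd_morphism A B F
  for A :: "('o,'m,'c) bigpd" and B :: "('p,'n,'d) bigpd" and F :: "('o,'m,'c,'p,'n,'d) bmor" +
  assumes weak_equivalence: "weak_equivalence A B F"
begin

lemma hom_equivalence: "x \<in> bOb A \<Longrightarrow> y \<in> bOb A \<Longrightarrow> hom_equivalence A B F x y"
  using weak_equivalence by (simp add: weak_equivalence_def)

lemma map_faithful:
  assumes "\<beta> \<in> Cell2 A a a'" "\<beta>' \<in> Cell2 A a a'" "m2 F \<beta> = m2 F \<beta>'"
  shows "\<beta> = \<beta>'"
proof -
  define x y where "x = bsrc A a" and "y = btgt A a"
  have a: "a \<in> Hom A x y" "a' \<in> Hom A x y"
    using assms(1) A.dom_cod_simps by (auto simp: Hom_def Cell2_def x_def y_def)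
  have xy: "x \<in> bOb A" "y \<in> bOb A" using a A.src_tgt_ob by (auto simp: Hom_def)
  obtain G1 G2 \<eta> where
    \<eta>_cell: "\<forall>f \<in> Hom A x y. \<eta> f \<in> Cell2 A f (G1 (m1 F f))" and
    \<eta>_nat: "\<forall>f \<in> Hom A x y. \<forall>f'. \<forall>\<alpha> \<in> Cell2 A f f'. bvc A (\<eta> f') \<alpha> = bvc A (G2 (m2 F \<alpha>)) (\<eta> f)"
    using hom_equivalence[OF xy] unfolding hom_equivalence_def by (elim exE conjE) (rule that; assumption)
  have "bvc A (\<eta> a') \<beta> = bvc A (\<eta> a') \<beta>'"
    using \<eta>_nat a assms by metis
  moreover have "\<eta> a' \<in> Cell2 A a' (G1 (m1 F a'))" using \<eta>_cell a by blast
  ultimately show ?thesis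
    using A.vc_cancel_left[of \<beta> \<beta>' "\<eta> a'"] assms by (auto simp: Cell2_def)
qed

lemma map_full:
  assumes "a \<in> Hom A x y" "a' \<in> Hom A x y" "\<theta> \<in> Cell2 B (m1 F a) (m1 F a')"
  obtains \<beta> where "\<beta> \<in> Cell2 A a a'" "m2 F \<beta> = \<theta>"
proof -
  have xy: "x \<in> bOb A" "y \<in> bOb A" using assms(1) A.src_tgt_ob by (auto simp: Hom_def)
  have Fa: "m1 F a \<in> Hom B (m0 F x) (m0 F y)" "m1 F a' \<in> Hom B (m0 F x) (m0 F y)"
    using assms hom_map by auto
  obtain G1 G2 \<eta> \<epsilon> where
    G2_cell: "\<forall>g \<in> Hom B (m0 F x) (m0 F y). \<forall>g'. \<forall>\<beta> \<in> Cell2 B g g'. G2 \<beta> \<in> Cell2 A (G1 g) (G1 g')" and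
    \<eta>_cell: "\<forall>f \<in> Hom A x y. \<eta> f \<in> Cell2 A f (G1 (m1 F f))" and
    \<eta>_nat: "\<forall>f \<in> Hom A x y. \<forall>f'. \<forall>\<alpha> \<in> Cell2 A f f'. bvc A (\<eta> f') \<alpha> = bvc A (G2 (m2 F \<alpha>)) (\<eta> f)" and
    \<epsilon>_cell: "\<forall>g \<in> Hom B (m0 F x) (m0 F y). \<epsilon> g \<in> Cell2 B (m1 F (G1 g)) g" and
    \<epsilon>_nat: "\<forall>g \<in> Hom B (m0 F x) (m0 F y). \<forall>g'. \<forall>\<beta> \<in> Cell2 B g g'.
          bvc B (\<epsilon> g') (m2 F (G2 \<beta>)) = bvc B \<beta> (\<epsilon> g)"
    using hom_equivalence[OF xy] unfolding hom_equivalence_def by (elim exE conjE) (rule that; assumption)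
  have G2\<theta>: "G2 \<theta> \<in> Cell2 A (G1 (m1 F a)) (G1 (m1 F a'))" using G2_cell Fa assms(3) by blast
  have \<eta>a: "\<eta> a \<in> Cell2 A a (G1 (m1 F a))" "\<eta> a' \<in> Cell2 A a' (G1 (m1 F a'))" using \<eta>_cell assms by auto
  \<comment> \<open>transport \<open>G2 \<theta>\<close> back along the unit \<open>\<eta>\<close>\<close>
  define \<beta> where "\<beta> = bvc A (binv A (\<eta> a')) (bvc A (G2 \<theta>) (\<eta> a))"
  have inner: "bvc A (G2 \<theta>) (\<eta> a) \<in> Cell2 A a (G1 (m1 F a'))"
    using A.vc_cell G2\<theta> \<eta>a by blast
  have \<beta>: "\<beta> \<in> Cell2 A a a'"
    unfolding \<beta>_def using A.vc_cell[OF inner A.inv_cell[OF \<eta>a(2)]] .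
  have F\<beta>: "m2 F \<beta> \<in> Cell2 B (m1 F a) (m1 F a')" using cell_map[OF \<beta>] .
  have "bvc A (G2 (m2 F \<beta>)) (\<eta> a) = bvc A (\<eta> a') \<beta>" using \<eta>_nat assms \<beta> by metis
  also have "\<dots> = bvc A (G2 \<theta>) (\<eta> a)"
    unfolding \<beta>_def using A.vc_inv_vc[of "\<eta> a'" "bvc A (G2 \<theta>) (\<eta> a)"] \<eta>a inner by (simp add: Cell2_def)
  finally have "G2 (m2 F \<beta>) = G2 \<theta>"
    using A.vc_cancel_right[of "G2 (m2 F \<beta>)" "G2 \<theta>" "\<eta> a"] G2\<theta> \<eta>a G2_cell Fa F\<beta>
    by (auto simp: Cell2_def)
  \<comment> \<open>\<open>G2\<close> is faithful as well, by naturality of the counit \<open>\<epsilon>\<close>\<close>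
  then have "bvc B (m2 F \<beta>) (\<epsilon> (m1 F a)) = bvc B \<theta> (\<epsilon> (m1 F a))"
    using \<epsilon>_nat Fa assms(3) F\<beta> by metis
  then have "m2 F \<beta> = \<theta>"
    using B.vc_cancel_right[of "m2 F \<beta>" \<theta> "\<epsilon> (m1 F a)"] \<epsilon>_cell Fa assms(3) F\<beta> by (auto simp: Cell2_def)
  then show thesis using that \<beta> by blast
qed

definition lift_cell :: "'m \<Rightarrow> 'm \<Rightarrow> 'd \<Rightarrow> 'c" where
  "lift_cell a a' \<theta> = (THE \<beta>. \<beta> \<in> Cell2 A a a' \<and> m2 F \<beta> = \<theta>)"

lemma lift_cell:
  assumes "a \<in> bArr A" "a' \<in> bArr A" "bsrc A a' = bsrc A a" "btgt A a' = btgt A a"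
    "\<theta> \<in> bCell B" "bdom B \<theta> = m1 F a" "bcod B \<theta> = m1 F a'"
  shows "lift_cell a a' \<theta> \<in> bCell A" "bdom A (lift_cell a a' \<theta>) = a" "bcod A (lift_cell a a' \<theta>) = a'"
    "m2 F (lift_cell a a' \<theta>) = \<theta>"
proof -
  obtain \<beta> where \<beta>: "\<beta> \<in> Cell2 A a a'" "m2 F \<beta> = \<theta>"
    using map_full[of a "bsrc A a" "btgt A a" a' \<theta>] assms by (auto simp: Hom_def Cell2_def)
  then have "lift_cell a a' \<theta> = \<beta>"
    unfolding lift_cell_def by (blast intro: the_equality map_faithful)
  with \<beta> show "lift_cell a a' \<theta> \<in> bCell A" "bdom A (lift_cell a a' \<theta>) = a" "bcod A (lift_cell a a' \<theta>) = a'"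
    "m2 F (lift_cell a a' \<theta>) = \<theta>" by (simp_all add: Cell2_def)
qed

lemma cell_eq_by_map:
  assumes "X \<in> bCell A" "Y \<in> bCell A" "bdom A X = bdom A Y" "bcod A X = bcod A Y" "m2 F X = m2 F Y"
  shows "X = Y"
  using map_faithful[of X "bdom A X" "bcod A X" Y] assms by (simp add: Cell2_def)

lemma cell_eq_by_map_vc:
  assumes "X \<in> bCell A" "Y \<in> bCell A" "bdom A X = bdom A Y" "bcod A X = bcod A Y"
    "\<Gamma> \<in> bCell B" "bcod B \<Gamma> = m1 F (bdom A X)" "bvc B (m2 F X) \<Gamma> = bvc B (m2 F Y) \<Gamma>"
  shows "X = Y"
proof (rule cell_eq_by_map[OF assms(1-4)])
  show "m2 F X = m2 F Y"
    by (rule B.vc_cancel_right[OF _ _ assms(5) _ _ assms(7)]) (use assms map_cell_simps in auto)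
qed

end

locale trivial_fibration_morphism = bigpd_morphism A B F
  for A :: "('o,'m,'c) bigpd" and B :: "('p,'n,'d) bigpd" and F :: "('o,'m,'c,'p,'n,'d) bmor" +
  assumes trivial_fibration: "trivial_fibration A B F"
begin

sublocale weak_equivalence_morphism
  using trivial_fibration by unfold_locales (simp add: trivial_fibration_def)

lemma fibration_arr:
  assumes "x' \<in> bOb A" "b \<in> bArr B" "btgt B b = m0 F x'"
  obtains a where "a \<in> bArr A" "btgt A a = x'" "m0 F (bsrc A a) = bsrc B b" "m1 F a = b"
  using trivial_fibration assms unfolding trivial_fibration_def fibration_def by blast

lemma fibration_cell:
  assumes "a' \<in> bArr A" "\<beta> \<in> bCell B" "bcod B \<beta> = m1 F a'"
  obtains \<alpha> where "\<alpha> \<in> bCell A" "bcod A \<alpha> = a'" "m1 F (bdom A \<alpha>) = bdom B \<beta>" "m2 F \<alpha> = \<beta>"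
  using trivial_fibration assms unfolding trivial_fibration_def fibration_def by blast

lemma surj_ob:
  assumes "d \<in> bOb B" obtains x where "x \<in> bOb A" "m0 F x = d"
proof -
  obtain x' c where "x' \<in> bOb A" "c \<in> Hom B d (m0 F x')"
    using weak_equivalence assms unfolding weak_equivalence_def by blast
  then obtain a where "a \<in> bArr A" "m0 F (bsrc A a) = d"
    using fibration_arr[of x' c] by (auto simp: Hom_def)
  then show thesis using that A.src_tgt_ob by blast
qed

lemma surj_hom:
  assumes "x \<in> bOb A" "y \<in> bOb A" "h \<in> Hom B (m0 F x) (m0 F y)"
  obtains b where "b \<in> Hom A x y" "m1 F b = h"
proof -
  obtain G1 :: "'n \<Rightarrow> 'm" and \<epsilon> where
    G1_hom: "\<forall>g \<in> Hom B (m0 F x) (m0 F y). G1 g \<in> Hom A x y" and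
    \<epsilon>_cell: "\<forall>g \<in> Hom B (m0 F x) (m0 F y). \<epsilon> g \<in> Cell2 B (m1 F (G1 g)) g"
    using hom_equivalence[OF assms(1,2)] unfolding hom_equivalence_def by (elim exE conjE) (rule that; assumption)
  have g: "G1 h \<in> Hom A x y" and "\<epsilon> h \<in> Cell2 B (m1 F (G1 h)) h" using G1_hom \<epsilon>_cell assms by auto
  then have "binv B (\<epsilon> h) \<in> Cell2 B h (m1 F (G1 h))" using B.inv_cell by blast
  then obtain \<alpha> where "\<alpha> \<in> bCell A" "bcod A \<alpha> = G1 h" "m1 F (bdom A \<alpha>) = h"
    using fibration_cell[of "G1 h" "binv B (\<epsilon> h)"] g by (auto simp: Hom_def Cell2_def)
  then show thesis
    using that[of "bdom A \<alpha>"] A.dom_cod_simps[of \<alpha>] g by (auto simp: Hom_def)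
qed

end

locale cofibration_morphism = bigpd_morphism A B F
  for A :: "('o,'m,'c) bigpd" and B :: "('p,'n,'d) bigpd" and F :: "('o,'m,'c,'p,'n,'d) bmor" +
  assumes cofibration: "cofibration A B F"
begin

lemma inj_on_ob: "inj_on (m0 F) (bOb A)"
  using cofibration by (simp add: cofibration_def)

lemma inj_on_arr: "inj_on (m1 F) (bArr A)"
proof (rule inj_onI)
  fix a a' assume a: "a \<in> bArr A" "a' \<in> bArr A" and eq: "m1 F a = m1 F a'"
  have "m0 F (bsrc A a) = m0 F (bsrc A a')" "m0 F (btgt A a) = m0 F (btgt A a')"
    using map_arr_simps[OF a(1)] map_arr_simps[OF a(2)] eq by simp_all
  then have "a' \<in> Hom A (bsrc A a) (btgt A a)"
    using a A.src_tgt_ob inj_on_ob by (auto simp: Hom_def dest: inj_onD)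
  moreover have "a \<in> Hom A (bsrc A a) (btgt A a)" using a by (simp add: Hom_def)
  moreover have "inj_on (m1 F) (Hom A (bsrc A a) (btgt A a))"
    using cofibration A.src_tgt_ob[OF a(1)] by (simp add: cofibration_def)
  ultimately show "a = a'" using eq by (blast dest: inj_onD)
qed

end

locale lifting_square =
  A: bigroupoid AA + B: bigroupoid BB + C: bigroupoid CC + D: bigroupoid DD
  + F: bigpd_morphism AA BB F + K: cofibration_morphism AA DD K
  + G: trivial_fibration_morphism BB CC G + H: bigpd_morphism DD CC H
  for AA :: "('a0,'a1,'a2) bigpd" and BB :: "('b0,'b1,'b2) bigpd"
    and CC :: "('c0,'c1,'c2) bigpd" and DD :: "('d0,'d1,'d2) bigpd"
    and F :: "('a0,'a1,'a2,'b0,'b1,'b2) bmor"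
    and K :: "('a0,'a1,'a2,'d0,'d1,'d2) bmor"
    and G :: "('b0,'b1,'b2,'c0,'c1,'c2) bmor"
    and H :: "('d0,'d1,'d2,'c0,'c1,'c2) bmor" +
  assumes square_commutes: "bmor_eq AA (bmor_comp CC G F) (bmor_comp CC H K)"
begin

lemma square_commutes_simps:
  shows "\<And>x. x \<in> bOb AA \<Longrightarrow> m0 G (m0 F x) = m0 H (m0 K x)"
    and "\<And>x. x \<in> bOb AA \<Longrightarrow> bvc CC (m2 G (mu F x)) (mu G (m0 F x)) = bvc CC (m2 H (mu K x)) (mu H (m0 K x))"
    and "\<And>f. f \<in> bArr AA \<Longrightarrow> m1 G (m1 F f) = m1 H (m1 K f)"
    and "\<And>f. f \<in> bArr AA \<Longrightarrow> bvc CC (m2 G (ms F f)) (ms G (m1 F f)) = bvc CC (m2 H (ms K f)) (ms H (m1 K f))"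
    and "\<And>\<alpha>. \<alpha> \<in> bCell AA \<Longrightarrow> m2 G (m2 F \<alpha>) = m2 H (m2 K \<alpha>)"
    and "\<And>f g. f \<in> bArr AA \<Longrightarrow> g \<in> bArr AA \<Longrightarrow> bsrc AA g = btgt AA f \<Longrightarrow>
          bvc CC (m2 G (mc F g f)) (mc G (m1 F g) (m1 F f)) = bvc CC (m2 H (mc K g f)) (mc H (m1 K g) (m1 K f))"
  using square_commutes unfolding bmor_eq_def bmor_comp_def by auto

lemmas typing_simps = A.typing_simps B.typing_simps C.typing_simps D.typing_simps
  F.map_arr_simps F.map_cell_simps F.ob_map F.mc_simps F.mu_simps F.ms_simps
  K.map_arr_simps K.map_cell_simps K.ob_map K.mc_simps K.mu_simps K.ms_simps
  G.map_arr_simps G.map_cell_simps G.ob_map G.mc_simps G.mu_simps G.ms_simps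
  H.map_arr_simps H.map_cell_simps H.ob_map H.mc_simps H.mu_simps H.ms_simps

definition L0 :: "'d0 \<Rightarrow> 'b0" where
  "L0 d = (if d \<in> m0 K ` bOb AA then m0 F (inv_into (bOb AA) (m0 K) d)
           else (SOME x. x \<in> bOb BB \<and> m0 G x = m0 H d))"

lemma L0_K: "a \<in> bOb AA \<Longrightarrow> L0 (m0 K a) = m0 F a"
  by (simp add: L0_def inv_into_f_f[OF K.inj_on_ob])

lemma L0_simps:
  assumes "d \<in> bOb DD" shows "L0 d \<in> bOb BB" "m0 G (L0 d) = m0 H d"
proof -
  have "L0 d \<in> bOb BB \<and> m0 G (L0 d) = m0 H d"
  proof (cases "d \<in> m0 K ` bOb AA")
    case True
    then obtain a where "a \<in> bOb AA" "d = m0 K a" by blast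
    then show ?thesis using L0_K square_commutes_simps(1) F.ob_map by auto
  next
    case False
    obtain x where "x \<in> bOb BB" "m0 G x = m0 H d" using G.surj_ob H.ob_map assms by metis
    then show ?thesis using False someI[of "\<lambda>x. x \<in> bOb BB \<and> m0 G x = m0 H d"] by (auto simp: L0_def)
  qed
  then show "L0 d \<in> bOb BB" "m0 G (L0 d) = m0 H d" by auto
qed

definition L1 :: "'d1 \<Rightarrow> 'b1" where
  "L1 f = (if f \<in> m1 K ` bArr AA then m1 F (inv_into (bArr AA) (m1 K) f)
           else (SOME b. b \<in> Hom BB (L0 (bsrc DD f)) (L0 (btgt DD f)) \<and> m1 G b = m1 H f))"

lemma L1_K: "a \<in> bArr AA \<Longrightarrow> L1 (m1 K a) = m1 F a"
  by (simp add: L1_def inv_into_f_f[OF K.inj_on_arr])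

lemma L1_simps:
  assumes "f \<in> bArr DD"
  shows "L1 f \<in> bArr BB" "bsrc BB (L1 f) = L0 (bsrc DD f)" "btgt BB (L1 f) = L0 (btgt DD f)"
    "m1 G (L1 f) = m1 H f"
proof -
  have "L1 f \<in> Hom BB (L0 (bsrc DD f)) (L0 (btgt DD f)) \<and> m1 G (L1 f) = m1 H f"
  proof (cases "f \<in> m1 K ` bArr AA")
    case True
    then obtain a where "a \<in> bArr AA" "f = m1 K a" by blast
    then show ?thesis
      using L1_K square_commutes_simps(3) F.map_arr_simps K.map_arr_simps L0_K A.src_tgt_ob
      by (auto simp: Hom_def)
  next
    case False
    have "m1 H f \<in> Hom CC (m0 G (L0 (bsrc DD f))) (m0 G (L0 (btgt DD f)))"
      using assms L0_simps D.src_tgt_ob H.map_arr_simps by (auto simp: Hom_def)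
    then obtain b where "b \<in> Hom BB (L0 (bsrc DD f)) (L0 (btgt DD f))" "m1 G b = m1 H f"
      using G.surj_hom L0_simps D.src_tgt_ob assms by metis
    then show ?thesis
      using False someI[of "\<lambda>b. b \<in> Hom BB (L0 (bsrc DD f)) (L0 (btgt DD f)) \<and> m1 G b = m1 H f"]
      by (auto simp: L1_def)
  qed
  then show "L1 f \<in> bArr BB" "bsrc BB (L1 f) = L0 (bsrc DD f)" "btgt BB (L1 f) = L0 (btgt DD f)"
    "m1 G (L1 f) = m1 H f" by (auto simp: Hom_def)
qed

definition L2 :: "'d2 \<Rightarrow> 'b2" where
  "L2 \<delta> = G.lift_cell (L1 (bdom DD \<delta>)) (L1 (bcod DD \<delta>)) (m2 H \<delta>)"

definition Lc :: "'d1 \<Rightarrow> 'd1 \<Rightarrow> 'b2" where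
  "Lc g f = G.lift_cell (bhc BB (L1 g) (L1 f)) (L1 (bhc DD g f))
      (bvc CC (mc H g f) (binv CC (mc G (L1 g) (L1 f))))"

definition Lu :: "'d0 \<Rightarrow> 'b2" where
  "Lu x = G.lift_cell (bone BB (L0 x)) (L1 (bone DD x)) (bvc CC (mu H x) (binv CC (mu G (L0 x))))"

definition Ls :: "'d1 \<Rightarrow> 'b2" where
  "Ls f = G.lift_cell (bst BB (L1 f)) (L1 (bst DD f)) (bvc CC (ms H f) (binv CC (ms G (L1 f))))"

lemmas typing_L01_simps = typing_simps L0_simps L1_simps

lemma L2_simps:
  assumes "\<delta> \<in> bCell DD"
  shows "L2 \<delta> \<in> bCell BB" "bdom BB (L2 \<delta>) = L1 (bdom DD \<delta>)" "bcod BB (L2 \<delta>) = L1 (bcod DD \<delta>)"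
    "m2 G (L2 \<delta>) = m2 H \<delta>"
  unfolding L2_def using D.dom_cod_simps[OF assms] by (auto intro!: G.lift_cell simp: typing_L01_simps assms)

lemma Lc_simps:
  assumes "f \<in> bArr DD" "g \<in> bArr DD" "btgt DD f = bsrc DD g"
  shows "Lc g f \<in> bCell BB" "bdom BB (Lc g f) = bhc BB (L1 g) (L1 f)" "bcod BB (Lc g f) = L1 (bhc DD g f)"
    "m2 G (Lc g f) = bvc CC (mc H g f) (binv CC (mc G (L1 g) (L1 f)))"
  unfolding Lc_def using assms by (auto intro!: G.lift_cell simp: typing_L01_simps)

lemma Lu_simps:
  assumes "x \<in> bOb DD"
  shows "Lu x \<in> bCell BB" "bdom BB (Lu x) = bone BB (L0 x)" "bcod BB (Lu x) = L1 (bone DD x)"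
    "m2 G (Lu x) = bvc CC (mu H x) (binv CC (mu G (L0 x)))"
  unfolding Lu_def using assms by (auto intro!: G.lift_cell simp: typing_L01_simps)

lemma Ls_simps:
  assumes "f \<in> bArr DD"
  shows "Ls f \<in> bCell BB" "bdom BB (Ls f) = bst BB (L1 f)" "bcod BB (Ls f) = L1 (bst DD f)"
    "m2 G (Ls f) = bvc CC (ms H f) (binv CC (ms G (L1 f)))"
  unfolding Ls_def using assms by (auto intro!: G.lift_cell simp: typing_L01_simps)

lemmas typing_L_simps = typing_L01_simps L2_simps(1-3) Lc_simps(1-3) Lu_simps(1-3) Ls_simps(1-3)

lemmas map_G_simps = C.assoc G.map_vc_cells G.map_id H.map_vc_cells H.map_id
  L2_simps(4) Lc_simps(4) Lu_simps(4) Ls_simps(4) L1_simps(4) L0_simps(2)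
  C.inv_vc_vc C.inv_vc C.vc_inv C.vc_inv_vc C.id_vc C.vc_id
  G.mc_nat_simp G.mc_nat_simp_vc G.ms_nat_simp G.ms_nat_simp_vc C.interchange C.interchange_vc

lemma L2_vc:
  assumes "\<alpha> \<in> bCell DD" "\<beta> \<in> bCell DD" "bcod DD \<alpha> = bdom DD \<beta>"
  shows "L2 (bvc DD \<beta> \<alpha>) = bvc BB (L2 \<beta>) (L2 \<alpha>)"
  using assms by (intro G.cell_eq_by_map) (simp_all add: typing_L_simps map_G_simps)

lemma L2_id:
  assumes "f \<in> bArr DD"
  shows "L2 (bid DD f) = bid BB (L1 f)"
  using assms by (intro G.cell_eq_by_map) (simp_all add: typing_L_simps map_G_simps)

text \<open>In the remaining equations \<open>\<Gamma>\<close> consists of the structure 2-cells of \<open>G\<close> whose inverses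
  occur in the image of the left-hand side; precomposing with it leaves an axiom of \<open>H\<close>.\<close>

lemma Lc_nat:
  assumes "\<alpha> \<in> bCell DD" "\<beta> \<in> bCell DD" "btgt DD (bdom DD \<alpha>) = bsrc DD (bdom DD \<beta>)"
  shows "bvc BB (Lc (bcod DD \<beta>) (bcod DD \<alpha>)) (bhcc BB (L2 \<beta>) (L2 \<alpha>))
       = bvc BB (L2 (bhcc DD \<beta> \<alpha>)) (Lc (bdom DD \<beta>) (bdom DD \<alpha>))"
  using H.mc_nat_cells[OF assms] D.dom_cod_simps[OF assms(1)] D.dom_cod_simps[OF assms(2)] assms
  by (intro G.cell_eq_by_map_vc[where \<Gamma> = "mc G (L1 (bdom DD \<beta>)) (L1 (bdom DD \<alpha>))"]) (simp_all add: typing_L_simps map_G_simps)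

lemma Ls_nat:
  assumes "\<alpha> \<in> bCell DD"
  shows "bvc BB (Ls (bcod DD \<alpha>)) (bstc BB (L2 \<alpha>)) = bvc BB (L2 (bstc DD \<alpha>)) (Ls (bdom DD \<alpha>))"
  using H.ms_nat_cells[OF assms] D.dom_cod_simps[OF assms(1)] assms
  by (intro G.cell_eq_by_map_vc[where \<Gamma> = "ms G (L1 (bdom DD \<alpha>))"]) (simp_all add: typing_L_simps map_G_simps)

lemma lift_coh_assoc:
  assumes "f \<in> bArr DD" "g \<in> bArr DD" "h \<in> bArr DD" "btgt DD f = bsrc DD g" "btgt DD g = bsrc DD h"
  shows "bvc BB (L2 (ba DD h g f)) (bvc BB (Lc (bhc DD h g) f) (bhcc BB (Lc h g) (bid BB (L1 f))))
    = bvc BB (Lc h (bhc DD g f)) (bvc BB (bhcc BB (bid BB (L1 h)) (Lc g f)) (ba BB (L1 h) (L1 g) (L1 f)))"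
  using H.coh_a[of f "bsrc DD f" "bsrc DD g" g "bsrc DD h" h "btgt DD h"]
    G.coh_a[of "L1 f" "L0 (bsrc DD f)" "L0 (bsrc DD g)" "L1 g" "L0 (bsrc DD h)" "L1 h" "L0 (btgt DD h)"] assms
  by (intro G.cell_eq_by_map_vc[where \<Gamma> = "bvc CC (mc G (bhc BB (L1 h) (L1 g)) (L1 f)) (bhcc CC (mc G (L1 h) (L1 g)) (bid CC (m1 G (L1 f))))"])
     (simp_all add: typing_L_simps map_G_simps Hom_def)

lemma lift_coh_runit:
  assumes "f \<in> bArr DD"
  shows "bvc BB (L2 (br DD f)) (bvc BB (Lc f (bone DD (bsrc DD f))) (bhcc BB (bid BB (L1 f)) (Lu (bsrc DD f))))
    = br BB (L1 f)"
  using H.coh_r[of f "bsrc DD f" "btgt DD f"]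
    G.coh_r[of "L1 f" "L0 (bsrc DD f)" "L0 (btgt DD f)"] assms
  by (intro G.cell_eq_by_map_vc[where \<Gamma> = "bvc CC (mc G (L1 f) (bone BB (L0 (bsrc DD f)))) (bhcc CC (bid CC (m1 G (L1 f))) (mu G (L0 (bsrc DD f))))"])
     (simp_all add: typing_L_simps map_G_simps Hom_def)

lemma lift_coh_lunit:
  assumes "f \<in> bArr DD"
  shows "bvc BB (L2 (bl DD f)) (bvc BB (Lc (bone DD (btgt DD f)) f) (bhcc BB (Lu (btgt DD f)) (bid BB (L1 f))))
    = bl BB (L1 f)"
  using H.coh_l[of f "bsrc DD f" "btgt DD f"]
    G.coh_l[of "L1 f" "L0 (bsrc DD f)" "L0 (btgt DD f)"] assms
  by (intro G.cell_eq_by_map_vc[where \<Gamma> = "bvc CC (mc G (bone BB (L0 (btgt DD f))) (L1 f)) (bhcc CC (mu G (L0 (btgt DD f))) (bid CC (m1 G (L1 f))))"])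
     (simp_all add: typing_L_simps map_G_simps Hom_def)

lemma lift_coh_e:
  assumes "f \<in> bArr DD"
  shows "bvc BB (L2 (be DD f)) (bvc BB (Lc (bst DD f) f) (bhcc BB (Ls f) (bid BB (L1 f))))
    = bvc BB (Lu (bsrc DD f)) (be BB (L1 f))"
  using H.coh_e[of f "bsrc DD f" "btgt DD f"]
    G.coh_e[of "L1 f" "L0 (bsrc DD f)" "L0 (btgt DD f)"] assms
  by (intro G.cell_eq_by_map_vc[where \<Gamma> = "bvc CC (mc G (bst BB (L1 f)) (L1 f)) (bhcc CC (ms G (L1 f)) (bid CC (m1 G (L1 f))))"])
     (simp_all add: typing_L_simps map_G_simps Hom_def)

lemma lift_coh_i:
  assumes "f \<in> bArr DD"
  shows "bvc BB (L2 (bi DD f)) (Lu (btgt DD f))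
    = bvc BB (Lc f (bst DD f)) (bvc BB (bhcc BB (bid BB (L1 f)) (Ls f)) (bi BB (L1 f)))"
  using H.coh_i[of f "bsrc DD f" "btgt DD f"]
    G.coh_i[of "L1 f" "L0 (bsrc DD f)" "L0 (btgt DD f)"] assms
  by (intro G.cell_eq_by_map_vc[where \<Gamma> = "mu G (L0 (btgt DD f))"])
     (simp_all add: typing_L_simps map_G_simps Hom_def)

definition lift_mor :: "('d0,'d1,'d2,'b0,'b1,'b2) bmor" where
  "lift_mor = \<lparr> m0 = L0, m1 = L1, m2 = L2, mc = Lc, mu = Lu, ms = Ls \<rparr>"

lemma lift_mor_bmorphism: "bmorphism DD BB lift_mor"
  by unfold_locales
    (auto simp: lift_mor_def Hom_def Cell2_def L0_simps L1_simps L2_simps Lc_simps Lu_simps Ls_simps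
      L2_vc L2_id Lc_nat Ls_nat lift_coh_assoc lift_coh_runit lift_coh_lunit lift_coh_e lift_coh_i)

lemmas comp_K_simps = square_commutes_simps(1,3,5) L0_K L1_K

lemma lift_mor_comp_K: "bmor_eq AA (bmor_comp BB lift_mor K) F"
  unfolding bmor_eq_def bmor_comp_def
proof (simp add: lift_mor_def, intro conjI ballI impI)
  fix x assume x: "x \<in> bOb AA"
  show "L0 (m0 K x) = m0 F x" using x L0_K by simp
  show "bvc BB (L2 (mu K x)) (Lu (m0 K x)) = mu F x"
    using square_commutes_simps(2)[OF x] x
    by (intro G.cell_eq_by_map_vc[where \<Gamma> = "mu G (m0 F x)"]) (simp_all add: typing_L_simps map_G_simps comp_K_simps)
next
  fix f assume f: "f \<in> bArr AA"
  show "L1 (m1 K f) = m1 F f" using f L1_K by simp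
  show "bvc BB (L2 (ms K f)) (Ls (m1 K f)) = ms F f"
    using square_commutes_simps(4)[OF f] f
    by (intro G.cell_eq_by_map_vc[where \<Gamma> = "ms G (m1 F f)"]) (simp_all add: typing_L_simps map_G_simps comp_K_simps)
next
  fix \<alpha> assume "\<alpha> \<in> bCell AA"
  then show "L2 (m2 K \<alpha>) = m2 F \<alpha>"
    by (intro G.cell_eq_by_map) (simp_all add: typing_L_simps map_G_simps comp_K_simps)
next
  fix f g assume fg: "f \<in> bArr AA" "g \<in> bArr AA" "bsrc AA g = btgt AA f"
  show "bvc BB (L2 (mc K g f)) (Lc (m1 K g) (m1 K f)) = mc F g f"
    using square_commutes_simps(6)[OF fg] fg
    by (intro G.cell_eq_by_map_vc[where \<Gamma> = "mc G (m1 F g) (m1 F f)"]) (simp_all add: typing_L_simps map_G_simps comp_K_simps)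
qed

lemma G_comp_lift_mor: "bmor_eq DD (bmor_comp CC G lift_mor) H"
  unfolding bmor_eq_def bmor_comp_def by (simp add: lift_mor_def typing_L_simps map_G_simps)

end

theorem lemma4p2:
  fixes AA :: "('a0,'a1,'a2) bigpd" and BB :: "('b0,'b1,'b2) bigpd"
    and CC :: "('c0,'c1,'c2) bigpd" and DD :: "('d0,'d1,'d2) bigpd"
    and F :: "('a0,'a1,'a2,'b0,'b1,'b2) bmor"
    and K :: "('a0,'a1,'a2,'d0,'d1,'d2) bmor"
    and G :: "('b0,'b1,'b2,'c0,'c1,'c2) bmor"
    and H :: "('d0,'d1,'d2,'c0,'c1,'c2) bmor"
  assumes "bigroupoid AA" "bigroupoid BB" "bigroupoid CC" "bigroupoid DD"
    and "bmorphism AA BB F" "bmorphism AA DD K" "bmorphism BB CC G" "bmorphism DD CC H"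
    and "bmor_eq AA (bmor_comp CC G F) (bmor_comp CC H K)"
    and "cofibration AA DD K"
    and "trivial_fibration BB CC G"
  shows "\<exists>L :: ('d0,'d1,'d2,'b0,'b1,'b2) bmor.
           bmorphism DD BB L \<and>
           bmor_eq AA (bmor_comp BB L K) F \<and>
           bmor_eq DD (bmor_comp CC G L) H"
proof -
  interpret lifting_square AA BB CC DD F K G H
    using assms by (simp add: lifting_square_def lifting_square_axioms_def bigpd_morphism_def
      cofibration_morphism_def cofibration_morphism_axioms_def
      trivial_fibration_morphism_def trivial_fibration_morphism_axioms_def)
  show ?thesis using lift_mor_bmorphism lift_mor_comp_K G_comp_lift_mor by blast
qed

end
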